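(* Let $X$ be a real Banach space with $\operatorname{dens} X = \kappa$. If $D \subseteq X$ is covered by fewer than $\operatorname{cf}(\kappa)$ many hyperplanes of $X$, then $D$ does not contain any overcomplete set for $X$.
   Context: A hyperplane of $X$ is a closed linear subspace of codimension one (the kernel of a non-zero bounded linear functional). $\operatorname{dens}$ denotes the density character and $\operatorname{cf}$ the cofinality. A subset $S$ of a Banach space $X$ with $|S| = \operatorname{dens} X$ is called overcomplete (for $X$) if every subset $\Lambda \subseteq S$ with $|\Lambda| = |S|$ is linearly dense in $X$. *)

theory Defs
  imports "HOL-Analysis.Analysis"
begin


text \<open>Cardinals are handled via the BNF cardinal library of Main:
  the cardinal of a set A is the canonical well-order card_of A, compared by
  ordLeq / ordLess / ordIso.\<close>

definition dens_set :: "'a::topological_space set" where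
  "dens_set = (SOME D. closure D = UNIV \<and> (\<forall>E :: 'a set. closure E = UNIV \<longrightarrow> ordLeq2 (card_of D) (card_of E)))"

definition dens :: "'a::topological_space rel" where
  "dens = card_of (dens_set :: 'a set)"

definition cofinal_set :: "'b rel \<Rightarrow> 'b set \<Rightarrow> bool" where
  "cofinal_set r C \<longleftrightarrow> C \<subseteq> Field r \<and> (\<forall>a\<in>Field r. \<exists>c\<in>C. (a, c) \<in> r)"

definition cof :: "'b rel \<Rightarrow> 'b rel" where
  "cof r = card_of (SOME C. cofinal_set r C \<and> (\<forall>C' :: 'b set. cofinal_set r C' \<longrightarrow> ordLeq2 (card_of C) (card_of C')))"

definition hyperplane :: "'a::real_normed_vector set \<Rightarrow> bool" where
  "hyperplane H \<longleftrightarrow> (\<exists>f :: 'a \<Rightarrow> real. bounded_linear f \<and> f \<noteq> (\<lambda>x. 0) \<and> H = {x. f x = 0})"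

definition overcomplete :: "'a::real_normed_vector set \<Rightarrow> bool" where
  "overcomplete S \<longleftrightarrow> ordIso2 (card_of S) (dens :: 'a rel) \<and>
     (\<forall>L \<subseteq> S. ordIso2 (card_of L) (card_of S) \<longrightarrow> closure (span L) = UNIV)"

end

(* Let kappa = dens X and let S be overcomplete, so |S| = kappa. For a hyperplane H the set
   S \<inter> H lies in the closed proper subspace H, hence is not linearly dense, hence
   |S \<inter> H| < kappa. Each such piece is no larger than some proper initial segment of a
   well-order of type kappa; fewer than cf(kappa) segments all lie inside a single one,
   of size mu < kappa. So |S| <= |\<H>| * mu < kappa, a contradiction. *)

theory Submission
  imports Defs
begin

unbundle cardinal_syntax

lemma card_of_Times_ordLess_infinite:
  assumes "infinite C" and "|A| <o |C|" and "|B| <o |C|"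
  shows "|A \<times> B| <o |C|"
proof (cases "finite A \<and> finite B")
  case True
  then have "finite (A \<times> B)" by simp
  then show ?thesis
    using assms(1) finite_ordLess_infinite[OF card_of_Well_order card_of_Well_order]
    by (simp add: Field_card_of)
next
  case False
  consider "|A| \<le>o |B|" | "|B| \<le>o |A|"
    using ordLeq_total[OF card_of_Well_order card_of_Well_order] by blast
  then show ?thesis
  proof cases
    case 1
    then have "infinite B" using False card_of_ordLeq_finite by blast
    have "|A \<times> B| \<le>o |B \<times> B|" using 1 by (rule card_of_Times_mono1)
    moreover have "|B \<times> B| =o |B|" using \<open>infinite B\<close> by (rule card_of_Times_same_infinite)
    ultimately show ?thesis using assms(3) ordLeq_ordIso_trans ordLeq_ordLess_trans by blast
  next
    case 2
    then have "infinite A" using False card_of_ordLeq_finite by blast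
    have "|A \<times> B| \<le>o |A \<times> A|" using 2 by (rule card_of_Times_mono2)
    moreover have "|A \<times> A| =o |A|" using \<open>infinite A\<close> by (rule card_of_Times_same_infinite)
    ultimately show ?thesis using assms(2) ordLeq_ordIso_trans ordLeq_ordLess_trans by blast
  qed
qed

lemma ordLess_imp_ordLeq_card_of_underS:
  assumes "Well_order r" and "|A| <o r"
  obtains a where "a \<in> Field r" and "|A| \<le>o |underS r a|"
proof -
  obtain a where a: "a \<in> Field r" and iso: "|A| =o Restr r (underS r a)"
    using assms ordLess_iff_ordIso_Restr card_of_Well_order by blast
  have "|A| \<le>o |Field (Restr r (underS r a))|"
    using card_of_mono2[OF ordIso_imp_ordLeq[OF iso]] by (simp only: Field_card_of)
  also have "|Field (Restr r (underS r a))| \<le>o |underS r a|"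
    by (rule card_of_mono1[OF Field_Restr_subset])
  finally show ?thesis using a that by blast
qed

lemma ex_card_of_minimal:
  assumes "P A"
  shows "\<exists>X. P X \<and> (\<forall>Y. P Y \<longrightarrow> |X| \<le>o |Y| )"
proof -
  have "card_of ` Collect P \<noteq> {}" using assms by blast
  moreover have "\<forall>q \<in> card_of ` Collect P. Card_order q" using card_of_Card_order by blast
  ultimately obtain X where "P X" and "\<forall>q \<in> card_of ` Collect P. |X| \<le>o q"
    using exists_minim_Card_order by (metis (no_types, lifting) imageE mem_Collect_eq)
  then show ?thesis by blast
qed

lemma cofinal_set_Field:
  assumes "Well_order r"
  shows "cofinal_set r (Field r)"
proof -
  have "refl_on (Field r) r" using assms unfolding order_on_defs by blast
  then show ?thesis unfolding cofinal_set_def refl_on_def by blast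
qed

lemma cof_ordLeq_card_of_cofinal_set:
  assumes "Well_order r" and "cofinal_set r C"
  shows "cof r \<le>o |C|"
proof -
  have "\<exists>C. cofinal_set r C \<and> (\<forall>C'. cofinal_set r C' \<longrightarrow> |C| \<le>o |C'| )"
    using cofinal_set_Field[OF assms(1)] by (rule ex_card_of_minimal)
  from someI_ex[OF this] show ?thesis
    using assms(2) unfolding cof_def by blast
qed

lemma cof_ordLeq:
  assumes "Card_order r"
  shows "cof r \<le>o r"
proof -
  have wo: "Well_order r" using assms by (rule card_order_on_well_order_on)
  have "cof r \<le>o |Field r|"
    using wo cofinal_set_Field[OF wo] by (rule cof_ordLeq_card_of_cofinal_set)
  also have "|Field r| =o r" using assms by (rule card_of_Field_ordIso)
  finally show ?thesis .
qed

lemma ordLess_cof_imp_subset_underS: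
  assumes wo: "Well_order r" and T: "T \<subseteq> Field r" and less: "|T| <o cof r"
  obtains b where "b \<in> Field r" and "T \<subseteq> underS r b"
proof -
  have "\<not> cofinal_set r T"
    using cof_ordLeq_card_of_cofinal_set[OF wo] less not_ordLess_ordLeq by blast
  then obtain b where b: "b \<in> Field r" and above: "\<forall>c\<in>T. (b, c) \<notin> r"
    using T unfolding cofinal_set_def by blast
  have "T \<subseteq> underS r b"
  proof
    fix c assume "c \<in> T"
    have "(c, b) \<in> r"
      using wo_rel.in_notinI[of r b c] wo above b T \<open>c \<in> T\<close> unfolding wo_rel_def by blast
    moreover have "c \<noteq> b"
      using wo_rel.REFL[of r] wo b above \<open>c \<in> T\<close> unfolding wo_rel_def refl_on_def by blast
    ultimately show "c \<in> underS r b" unfolding underS_def by blast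
  qed
  then show ?thesis using b that by blast
qed

lemma card_of_UNION_ordLess_cof:
  assumes r: "Card_order r" and inf: "infinite (Field r)"
    and I: "|I| <o cof r" and A: "\<And>i. i \<in> I \<Longrightarrow> |A i| <o r"
  shows "|\<Union>i\<in>I. A i| <o r"
proof -
  have wo: "Well_order r" using r by (rule card_order_on_well_order_on)
  then have "trans r" "antisym r" unfolding order_on_defs by auto
  have "\<forall>i\<in>I. \<exists>c. c \<in> Field r \<and> |A i| \<le>o |underS r c|"
  proof
    fix i assume "i \<in> I"
    from ordLess_imp_ordLeq_card_of_underS[OF wo A[OF this]]
    show "\<exists>c. c \<in> Field r \<and> |A i| \<le>o |underS r c|" by blast
  qed
  then obtain c where c: "\<And>i. i \<in> I \<Longrightarrow> c i \<in> Field r"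
    and A_le: "\<And>i. i \<in> I \<Longrightarrow> |A i| \<le>o |underS r (c i)|"
    by metis
  have "|c ` I| <o cof r" using card_of_image I by (rule ordLeq_ordLess_trans)
  then obtain b where b: "b \<in> Field r" and bound: "c ` I \<subseteq> underS r b"
    using ordLess_cof_imp_subset_underS[OF wo] c by blast
  have A_le_b: "|A i| \<le>o |underS r b|" if "i \<in> I" for i
  proof -
    have "(c i, b) \<in> r" using bound that unfolding underS_def by blast
    then have "underS r (c i) \<subseteq> underS r b"
      by (rule underS_incr[OF \<open>trans r\<close> \<open>antisym r\<close>])
    then show ?thesis by (rule ordLeq_transitive[OF A_le[OF that] card_of_mono1])
  qed
  have "|Field r| =o r" using r by (rule card_of_Field_ordIso)
  have "|I| <o r" using I cof_ordLeq[OF r] by (rule ordLess_ordLeq_trans)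
  then have "|I| <o |Field r|"
    using \<open>|Field r| =o r\<close> ordIso_symmetric ordLess_ordIso_trans by blast
  have "|underS r b| <o r" using r b by (rule card_of_underS)
  then have "|underS r b| <o |Field r|"
    using \<open>|Field r| =o r\<close> ordIso_symmetric ordLess_ordIso_trans by blast
  have "|\<Union>i\<in>I. A i| \<le>o |SIGMA i:I. A i|" by (rule card_of_UNION_Sigma)
  also have "|SIGMA i:I. A i| \<le>o |I \<times> underS r b|"
    using A_le_b by (intro card_of_Sigma_mono1) blast
  also have "|I \<times> underS r b| <o |Field r|"
    using inf \<open>|I| <o |Field r|\<close> \<open>|underS r b| <o |Field r|\<close>
    by (rule card_of_Times_ordLess_infinite)
  also have "|Field r| =o r" by fact
  finally show ?thesis .
qed

lemma closure_dens_set: "closure (dens_set :: 'a::topological_space set) = UNIV"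
proof -
  have "\<exists>D :: 'a set. closure D = UNIV \<and> (\<forall>E :: 'a set. closure E = UNIV \<longrightarrow> |D| \<le>o |E| )"
    using ex_card_of_minimal[of "\<lambda>D :: 'a set. closure D = UNIV" UNIV] by simp
  from someI_ex[OF this] show ?thesis unfolding dens_set_def by (rule conjunct1)
qed

lemma Card_order_dens: "Card_order (dens :: 'a::topological_space rel)"
  unfolding dens_def by (rule card_of_Card_order)

lemma Field_dens: "Field (dens :: 'a::topological_space rel) = dens_set"
  unfolding dens_def by (rule Field_card_of)

lemma hyperplane_closed: "hyperplane H \<Longrightarrow> closed H"
  unfolding hyperplane_def
  by (auto intro: closed_Collect_eq linear_continuous_on)

lemma hyperplane_subspace: "hyperplane H \<Longrightarrow> subspace H"
  unfolding hyperplane_def by (auto simp: subspace_def linear_simps)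

lemma hyperplane_ne_UNIV: "hyperplane H \<Longrightarrow> H \<noteq> UNIV"
  unfolding hyperplane_def by auto

lemma infinite_UNIV_if_hyperplane:
  assumes "hyperplane (H :: 'a::real_normed_vector set)"
  shows "infinite (UNIV :: 'a set)"
proof -
  obtain f :: "'a \<Rightarrow> real" where f: "bounded_linear f" "f \<noteq> (\<lambda>x. 0)"
    using assms unfolding hyperplane_def by blast
  then obtain x where x: "f x \<noteq> 0" by auto
  have "f ((t / f x) *\<^sub>R x) = t" for t using f(1) x by (simp add: linear_simps)
  then have "surj f" by (rule surjI[where f = "\<lambda>t. (t / f x) *\<^sub>R x"])
  then show ?thesis using infinite_UNIV_char_0 finite_imageI by metis
qed

lemma infinite_dens_set_if_hyperplane:
  assumes "hyperplane (H :: 'a::real_normed_vector set)"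
  shows "infinite (dens_set :: 'a set)"
proof
  assume "finite (dens_set :: 'a set)"
  then have "(dens_set :: 'a set) = UNIV"
    using closure_dens_set finite_imp_closed closure_closed by metis
  then show False
    using \<open>finite dens_set\<close> infinite_UNIV_if_hyperplane[OF assms] by simp
qed

(* This comes from |S| = dens, not from linear density: in the zero space the empty set
   is linearly dense. *)
lemma overcomplete_nonempty:
  assumes "overcomplete (S :: 'a::real_normed_vector set)"
  shows "S \<noteq> {}"
proof
  assume "S = {}"
  have "|S| =o |dens_set :: 'a set|" using assms unfolding overcomplete_def dens_def by blast
  then have "|dens_set :: 'a set| =o |{} :: 'a set|" using \<open>S = {}\<close> ordIso_symmetric by blast
  then have "(dens_set :: 'a set) = {}" by (rule card_of_empty2)
  then show False using closure_dens_set[where 'a='a] by simp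
qed

lemma overcomplete_Int_hyperplane_ordLess:
  assumes S: "overcomplete S" and H: "hyperplane H"
  shows "|S \<inter> H| <o |S|"
proof -
  have "closure (span (S \<inter> H)) \<subseteq> H"
    using hyperplane_closed[OF H] hyperplane_subspace[OF H]
    by (simp add: closure_minimal span_minimal)
  then have "\<not> |S \<inter> H| =o |S|"
    using S hyperplane_ne_UNIV[OF H] unfolding overcomplete_def by blast
  moreover have "|S \<inter> H| \<le>o |S|" by (rule card_of_mono1) blast
  ultimately show ?thesis using ordLeq_iff_ordLess_or_ordIso by blast
qed

theorem proposition3p10:
  fixes D :: "'a::banach set" and \<H> :: "'a set set"
  assumes "\<forall>H\<in>\<H>. hyperplane H"
    and "D \<subseteq> \<Union>\<H>"
    and "ordLess2 (card_of \<H>) (cof (dens :: 'a rel))"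
  shows "\<not> (\<exists>S \<subseteq> D. overcomplete S)"
proof
  assume "\<exists>S \<subseteq> D. overcomplete S"
  then obtain S where "S \<subseteq> D" and S: "overcomplete S" by blast
  then have S_cover: "(\<Union>H\<in>\<H>. S \<inter> H) = S" using assms(2) by blast
  then obtain H where "H \<in> \<H>" using overcomplete_nonempty[OF S] by blast
  then have infinite_dens: "infinite (Field (dens :: 'a rel))"
    using assms(1) infinite_dens_set_if_hyperplane[of H] by (simp add: Field_dens)
  have S_dens: "|S| =o (dens :: 'a rel)" using S unfolding overcomplete_def by blast
  have "|S \<inter> H| <o (dens :: 'a rel)" if "H \<in> \<H>" for H
  proof -
    have "hyperplane H" using assms(1) that by blast
    then show ?thesis
      by (rule ordLess_ordIso_trans[OF overcomplete_Int_hyperplane_ordLess[OF S] S_dens])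
  qed
  then have "|\<Union>H\<in>\<H>. S \<inter> H| <o (dens :: 'a rel)"
    by (rule card_of_UNION_ordLess_cof[OF Card_order_dens infinite_dens assms(3)])
  then have "|S| <o (dens :: 'a rel)" unfolding S_cover .
  then show False using S_dens by (simp add: not_ordLess_ordIso)
qed

end
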